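(* Let $\mathcal{G}$ and $\mathcal{G}'$ be abstract GKM graphs of types $(r,n)$ and $(r,n')$ for the same compact torus $T$ of rank $r$. Then $H_T^*(\mathcal{G})$ and $H_T^*(\mathcal{G}')$ are isomorphic as $H^*(BT)$-algebras if and only if $\mathcal{G}$ and $\mathcal{G}'$ are isomorphic as GKM graphs.
   Context: Let $T$ be a compact torus of rank $r$, so $H^*(BT)=\mathbb{Z}[x_1,\dots,x_r]$ with $\deg x_i=2$. An abstract GKM graph of type $(r,n)$ is a finite $n$-valent undirected graph (multi-edges allowed, no loops) with vertex set $\mathcal{V}$ and set of directed edges $\mathcal{E}$, together with an axial function $\alpha\colon\mathcal{E}\to H^2(BT)$ satisfying: $\alpha(\overline{e})=\pm\alpha(e)$ (where $\overline{e}$ is $e$ reversed); $\alpha(e),\alpha(e')$ are linearly independent over $\mathbb{Z}$ whenever $e\neq e'$ have the same initial vertex; and the coefficients of each $\alpha(e)$ have gcd $1$. Moreover it must admit a parallel transport: a family of bijections $\mathcal{P}_e\colon\mathcal{E}_{i(e)}\to\mathcal{E}_{t(e)}$ (where $\mathcal{E}_p$ denotes the directed edges with initial point $p$, and $i(e),t(e)$ the initial and terminal points of $e$) with $\mathcal{P}_{\overline{e}}=\mathcal{P}_e^{-1}$, $\mathcal{P}_e(e)=\overline{e}$, and $\alpha(\mathcal{P}_e(e'))-\alpha(e')\in\mathbb{Z}\,\alpha(e)$. The graph equivariant cohomology is $H_T^*(\mathcal{G})=\{f\colon\mathcal{V}\to H^*(BT)\mid \alpha(e)\text{ divides } f(i(e))-f(t(e))\text{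 for all }e\in\mathcal{E}\}$, a graded $H^*(BT)$-subalgebra of all functions $\mathcal{V}\to H^*(BT)$. For distinct vertices $p,q$ let $P_{pq}=\prod_{e\in\mathcal{E}_{pq}}\alpha(e)$, where $\mathcal{E}_{pq}$ is the set of directed edges from $p$ to $q$. An isomorphism $\mathcal{G}'\to\mathcal{G}$ of GKM graphs is a bijection $\varphi_{\mathcal{V}}\colon\mathcal{V}'\to\mathcal{V}$ with $P_{\varphi_{\mathcal{V}}(p')\varphi_{\mathcal{V}}(q')}=\pm P_{p'q'}$ for all vertices $p',q'$ of $\mathcal{G}'$. *)

theory Defs
  imports Main "HOL-Library.Poly_Mapping"
begin

text \<open>H^*(BT) = Z[x_i | i in 'r], 'r a finite index type with CARD('r) = r (rank of T).
  Polynomials are finitely supported maps from monomials (exponent vectors) to integer coefficients.\<close>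
type_synonym 'r pol = "('r \<Rightarrow>\<^sub>0 nat) \<Rightarrow>\<^sub>0 int"

definition lin :: "('r::finite \<Rightarrow> int) \<Rightarrow> 'r pol" where
  "lin a = (\<Sum>i\<in>UNIV. Poly_Mapping.single (Poly_Mapping.single i 1) (a i))"

definition out_edges :: "'e set \<Rightarrow> ('e \<Rightarrow> 'v) \<Rightarrow> 'v \<Rightarrow> 'e set" where
  "out_edges E src p = {e \<in> E. src e = p}"

text \<open>Abstract GKM graph of type (r,n): vertex set V, directed edge set E, initial/terminal
  point maps src/tgt, reversal rv (e bar), axial function alpha given by integer coefficient
  vectors in H^2(BT) = Z^r.\<close>
definition gkm_graph ::
  "nat \<Rightarrow> 'v set \<Rightarrow> 'e set \<Rightarrow> ('e \<Rightarrow> 'v) \<Rightarrow> ('e \<Rightarrow> 'v) \<Rightarrow> ('e \<Rightarrow> 'e)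
    \<Rightarrow> ('e \<Rightarrow> ('r::finite \<Rightarrow> int)) \<Rightarrow> bool" where
  "gkm_graph n V E src tgt rv \<alpha> \<longleftrightarrow>
     finite V \<and> finite E \<and>
     (\<forall>e\<in>E. src e \<in> V \<and> tgt e \<in> V \<and> src e \<noteq> tgt e \<and>
              rv e \<in> E \<and> rv e \<noteq> e \<and> rv (rv e) = e \<and>
              src (rv e) = tgt e \<and> tgt (rv e) = src e) \<and>
     (\<forall>p\<in>V. card (out_edges E src p) = n) \<and>
     (\<forall>e\<in>E. \<alpha> (rv e) = \<alpha> e \<or> \<alpha> (rv e) = - \<alpha> e) \<and>
     (\<forall>e\<in>E. \<forall>e'\<in>E. e \<noteq> e' \<and> src e = src e' \<longrightarrow>
        (\<forall>a b :: int. (\<forall>i. a * \<alpha> e i + b * \<alpha> e' i = 0) \<longrightarrow> a = 0 \<and> b = 0)) \<and>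
     (\<forall>e\<in>E. Gcd (range (\<alpha> e)) = 1) \<and>
     (\<exists>P :: 'e \<Rightarrow> 'e \<Rightarrow> 'e.
        \<forall>e\<in>E. bij_betw (P e) (out_edges E src (src e)) (out_edges E src (tgt e)) \<and>
              (\<forall>e'\<in>out_edges E src (src e). P (rv e) (P e e') = e') \<and>
              P e e = rv e \<and>
              (\<forall>e'\<in>out_edges E src (src e). \<exists>k::int. (\<forall>i. \<alpha> (P e e') i - \<alpha> e' i = k * \<alpha> e i)))"

text \<open>Graph equivariant cohomology H_T^*(G): functions V -> H^*(BT) (extended by 0 outside V)
  satisfying the GKM divisibility conditions.\<close>
definition gkm_cohom ::
  "'v set \<Rightarrow> 'e set \<Rightarrow> ('e \<Rightarrow> 'v) \<Rightarrow> ('e \<Rightarrow> 'v) \<Rightarrow> ('e \<Rightarrow> ('r::finite \<Rightarrow> int))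
    \<Rightarrow> ('v \<Rightarrow> 'r pol) set" where
  "gkm_cohom V E src tgt \<alpha> =
     {f. (\<forall>v. v \<notin> V \<longrightarrow> f v = 0) \<and>
         (\<forall>e\<in>E. lin (\<alpha> e) dvd f (src e) - f (tgt e))}"

definition one_on :: "'v set \<Rightarrow> 'v \<Rightarrow> 'r pol" where
  "one_on V = (\<lambda>v. if v \<in> V then 1 else 0)"

definition alg_iso ::
  "'v set \<Rightarrow> ('v \<Rightarrow> 'r pol) set \<Rightarrow> 'w set \<Rightarrow> ('w \<Rightarrow> 'r pol) set
    \<Rightarrow> (('v \<Rightarrow> 'r pol) \<Rightarrow> ('w \<Rightarrow> 'r pol)) \<Rightarrow> bool" where
  "alg_iso V A W B \<Phi> \<longleftrightarrow>
     bij_betw \<Phi> A B \<and>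
     (\<forall>f\<in>A. \<forall>g\<in>A. \<Phi> (\<lambda>v. f v + g v) = (\<lambda>w. \<Phi> f w + \<Phi> g w)) \<and>
     (\<forall>f\<in>A. \<forall>g\<in>A. \<Phi> (\<lambda>v. f v * g v) = (\<lambda>w. \<Phi> f w * \<Phi> g w)) \<and>
     (\<forall>c. \<forall>f\<in>A. \<Phi> (\<lambda>v. c * f v) = (\<lambda>w. c * \<Phi> f w)) \<and>
     \<Phi> (one_on V) = one_on W"

definition P_prod ::
  "'e set \<Rightarrow> ('e \<Rightarrow> 'v) \<Rightarrow> ('e \<Rightarrow> 'v) \<Rightarrow> ('e \<Rightarrow> ('r::finite \<Rightarrow> int)) \<Rightarrow> 'v \<Rightarrow> 'v \<Rightarrow> 'r pol" where
  "P_prod E src tgt \<alpha> p q = (\<Prod>e\<in>{e \<in> E. src e = p \<and> tgt e = q}. lin (\<alpha> e))"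

definition gkm_iso ::
  "'w set \<Rightarrow> 'f set \<Rightarrow> ('f \<Rightarrow> 'w) \<Rightarrow> ('f \<Rightarrow> 'w) \<Rightarrow> ('f \<Rightarrow> ('r::finite \<Rightarrow> int)) \<Rightarrow>
   'v set \<Rightarrow> 'e set \<Rightarrow> ('e \<Rightarrow> 'v) \<Rightarrow> ('e \<Rightarrow> 'v) \<Rightarrow> ('e \<Rightarrow> ('r \<Rightarrow> int)) \<Rightarrow>
   ('w \<Rightarrow> 'v) \<Rightarrow> bool" where
  "gkm_iso V' E' src' tgt' \<alpha>' V E src tgt \<alpha> \<phi> \<longleftrightarrow>
     bij_betw \<phi> V' V \<and>
     (\<forall>p\<in>V'. \<forall>q\<in>V'. p \<noteq> q \<longrightarrow>
        P_prod E src tgt \<alpha> (\<phi> p) (\<phi> q) = P_prod E' src' tgt' \<alpha>' p q \<or>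
        P_prod E src tgt \<alpha> (\<phi> p) (\<phi> q) = - P_prod E' src' tgt' \<alpha>' p q)"

end

theory Submission
  imports Defs "HOL-Computational_Algebra.Polynomial"
begin

text \<open>The labels of a GKM graph are primitive linear forms, and these are prime elements of
  \<open>\<int>[x\<^sub>1, \<dots>, x\<^sub>r]\<close>: unimodular substitutions (Euclid's algorithm on the coefficients)
  reduce to a form with a unit coefficient, which generates the kernel of an evaluation into
  the domain \<open>\<int>[x\<^sub>1, \<dots>, x\<^sub>r]\<close>. By primality, the GKM conditions along the edges from \<open>p\<close> to
  \<open>q\<close> amount to divisibility by \<open>P\<^sub>p\<^sub>q\<close>, so an isomorphism of GKM graphs induces the pullback
  isomorphism of algebras.

  Conversely, the Thom class of a vertex \<open>p\<close> (the product \<open>\<Lambda>\<^sub>p\<close> of the labels at \<open>p\<close>, placed at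
  \<open>p\<close>) satisfies \<open>\<tau>\<^sub>p\<^sup>2 = \<Lambda>\<^sub>p \<tau>\<^sub>p\<close> and \<open>\<tau>\<^sub>p \<tau>\<^sub>q = 0\<close>; hence an algebra isomorphism maps it to a
  class supported at a single vertex, and is the pullback along a bijection of the vertex sets.
  Edges can be read off the algebra: an edge from \<open>p\<close> to \<open>s\<close> with label \<open>\<plusminus>b\<close> exists iff
  \<open>b\<close> divides \<open>f p - f s\<close> for every class \<open>f\<close>, which is tested on Thom classes and on classes
  supported on the two ends of an edge. So the bijection matches the edges between any two
  vertices together with their labels up to sign, and \<open>P\<^sub>\<phi>\<^sub>p\<^sub>\<phi>\<^sub>q = \<plusminus>P\<^sub>p\<^sub>q\<close>.\<close>

section \<open>Evaluation of polynomials\<close>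

definition pvar :: "'k \<Rightarrow> ('k \<Rightarrow>\<^sub>0 nat) \<Rightarrow>\<^sub>0 int" where
  "pvar i = Poly_Mapping.single (Poly_Mapping.single i 1) 1"

definition eval_monom :: "('r::finite \<Rightarrow> 'b::comm_ring_1) \<Rightarrow> ('r \<Rightarrow>\<^sub>0 nat) \<Rightarrow> 'b" where
  "eval_monom \<sigma> m = (\<Prod>i\<in>UNIV. \<sigma> i ^ Poly_Mapping.lookup m i)"

definition eval_pol :: "('r::finite \<Rightarrow> 'b::comm_ring_1) \<Rightarrow> 'r pol \<Rightarrow> 'b" where
  "eval_pol \<sigma> g =
     (\<Sum>m\<in>Poly_Mapping.keys g. of_int (Poly_Mapping.lookup g m) * eval_monom \<sigma> m)"

lemma eval_monom_add: "eval_monom \<sigma> (m + m') = eval_monom \<sigma> m * eval_monom \<sigma> m'"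
  by (simp add: eval_monom_def lookup_add power_add prod.distrib)

lemma eval_monom_zero [simp]: "eval_monom \<sigma> 0 = 1"
  by (simp add: eval_monom_def)

lemma eval_monom_single [simp]: "eval_monom \<sigma> (Poly_Mapping.single i 1) = \<sigma> i"
proof -
  have "eval_monom \<sigma> (Poly_Mapping.single i 1) = (\<Prod>j\<in>UNIV. if j = i then \<sigma> i else 1)"
    unfolding eval_monom_def by (intro prod.cong refl) (auto simp: lookup_single when_def)
  also have "\<dots> = \<sigma> i" by simp
  finally show ?thesis .
qed

lemma eval_pol_superset:
  assumes "finite S" "Poly_Mapping.keys g \<subseteq> S"
  shows "eval_pol \<sigma> g = (\<Sum>m\<in>S. of_int (Poly_Mapping.lookup g m) * eval_monom \<sigma> m)"
  unfolding eval_pol_def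
  by (rule sum.mono_neutral_left[OF assms]) (auto simp: in_keys_iff)

lemma eval_pol_add: "eval_pol \<sigma> (g + h) = eval_pol \<sigma> g + eval_pol \<sigma> h"
proof -
  let ?S = "Poly_Mapping.keys g \<union> Poly_Mapping.keys h"
  have "Poly_Mapping.keys (g + h) \<subseteq> ?S" by (rule keys_add)
  then show ?thesis
    by (simp add: eval_pol_superset[of ?S] lookup_add distrib_right sum.distrib)
qed

lemma eval_pol_zero [simp]: "eval_pol \<sigma> 0 = 0"
  by (simp add: eval_pol_def)

lemma eval_pol_sum: "eval_pol \<sigma> (\<Sum>x\<in>A. f x) = (\<Sum>x\<in>A. eval_pol \<sigma> (f x))"
  by (induction A rule: infinite_finite_induct) (auto simp: eval_pol_add)

lemma eval_pol_single: "eval_pol \<sigma> (Poly_Mapping.single m c) = of_int c * eval_monom \<sigma> m"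
  by (cases "c = 0") (auto simp: eval_pol_def)

lemma sum_single_lookup:
  assumes "finite S" "Poly_Mapping.keys g \<subseteq> S"
  shows "(\<Sum>m\<in>S. Poly_Mapping.single m (Poly_Mapping.lookup g m)) = g"
proof (rule poly_mapping_eqI)
  fix k
  have "Poly_Mapping.lookup (\<Sum>m\<in>S. Poly_Mapping.single m (Poly_Mapping.lookup g m)) k
      = (\<Sum>m\<in>S. Poly_Mapping.lookup g m when m = k)"
    by (simp add: lookup_sum lookup_single)
  also have "\<dots> = Poly_Mapping.lookup g k"
    using assms by (cases "k \<in> S") (auto simp: when_def in_keys_iff)
  finally show "Poly_Mapping.lookup (\<Sum>m\<in>S. Poly_Mapping.single m (Poly_Mapping.lookup g m)) k
      = Poly_Mapping.lookup g k" .
qed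

lemma eval_pol_mult: "eval_pol \<sigma> (g * h) = eval_pol \<sigma> g * eval_pol \<sigma> h"
proof -
  let ?c = "\<lambda>g m. Poly_Mapping.single m (Poly_Mapping.lookup g m)"
  have "g * h = (\<Sum>m\<in>Poly_Mapping.keys g. ?c g m) * (\<Sum>m'\<in>Poly_Mapping.keys h. ?c h m')"
    by (simp add: sum_single_lookup)
  also have "\<dots> = (\<Sum>m\<in>Poly_Mapping.keys g. \<Sum>m'\<in>Poly_Mapping.keys h.
      Poly_Mapping.single (m + m') (Poly_Mapping.lookup g m * Poly_Mapping.lookup h m'))"
    by (simp add: sum_product mult_single)
  finally have "eval_pol \<sigma> (g * h) = (\<Sum>m\<in>Poly_Mapping.keys g. \<Sum>m'\<in>Poly_Mapping.keys h.
      (of_int (Poly_Mapping.lookup g m) * eval_monom \<sigma> m) *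
      (of_int (Poly_Mapping.lookup h m') * eval_monom \<sigma> m'))"
    by (simp add: eval_pol_sum eval_pol_single eval_monom_add mult_ac)
  also have "\<dots> = eval_pol \<sigma> g * eval_pol \<sigma> h"
    unfolding eval_pol_def by (rule sum_product[symmetric])
  finally show ?thesis .
qed

lemma eval_pol_one [simp]: "eval_pol \<sigma> 1 = 1"
  using eval_pol_single[of \<sigma> 0 1] by simp

lemma eval_pol_prod: "eval_pol \<sigma> (\<Prod>x\<in>A. f x) = (\<Prod>x\<in>A. eval_pol \<sigma> (f x))"
  by (induction A rule: infinite_finite_induct) (auto simp: eval_pol_mult)

lemma eval_pol_power: "eval_pol \<sigma> (g ^ k) = eval_pol \<sigma> g ^ k"
  by (induction k) (auto simp: eval_pol_mult)

lemma eval_pol_dvd: "a dvd b \<Longrightarrow> eval_pol \<sigma> a dvd eval_pol \<sigma> b"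
  by (auto simp: eval_pol_mult)

lemma of_int_pol: "(of_int c :: ('k \<Rightarrow>\<^sub>0 nat) \<Rightarrow>\<^sub>0 int) = Poly_Mapping.single 0 c"
  by (metis single_of_int of_int_eq_id id_apply)

lemma eval_pol_of_int [simp]: "eval_pol \<sigma> (of_int c) = of_int c"
  by (simp add: of_int_pol eval_pol_single)

lemma eval_pol_pvar [simp]: "eval_pol \<sigma> (pvar i) = \<sigma> i"
  unfolding pvar_def eval_pol_single eval_monom_single by simp

lemma eval_pol_eval_pol:
  "eval_pol \<sigma> (eval_pol \<tau> g) = eval_pol (\<lambda>i. eval_pol \<sigma> (\<tau> i)) (g :: 'r::finite pol)"
  by (simp only: eval_pol_def[of \<tau> g] eval_pol_sum eval_pol_mult eval_pol_of_int
      eval_monom_def eval_pol_prod eval_pol_power) (simp add: eval_pol_def eval_monom_def)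

lemma poly_eval_pol: "poly (eval_pol \<sigma> q) x = eval_pol (\<lambda>i. poly (\<sigma> i) x) q"
  by (simp add: eval_pol_def eval_monom_def poly_sum poly_prod of_int_poly)

lemma eval_pol_const_term:
  "eval_pol (\<lambda>_. 0 :: 'a::comm_ring_1) q = of_int (Poly_Mapping.lookup q 0)"
proof -
  have monom: "eval_monom (\<lambda>_. 0 :: 'a) m = (if m = 0 then 1 else 0)" for m
  proof (cases "m = 0")
    case False
    then obtain l where "Poly_Mapping.lookup m l \<noteq> 0"
      by (metis lookup_zero poly_mapping_eqI)
    then show ?thesis
      using False unfolding eval_monom_def by (auto simp: power_0_left intro!: prod_zero)
  qed simp
  show ?thesis
    by (cases "0 \<in> Poly_Mapping.keys q")
      (auto simp: eval_pol_def in_keys_iff monom if_distrib[of "\<lambda>x. _ * x"] cong: if_cong)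
qed

lemma dvd_diff_mult:
  fixes d :: "'a::comm_ring_1"
  assumes "d dvd x - y" "d dvd x' - y'"
  shows "d dvd x * x' - y * y'"
proof -
  have "x * x' - y * y' = x * (x' - y') + (x - y) * y'" by (simp add: algebra_simps)
  then show ?thesis using assms by simp
qed

lemma dvd_diff_power:
  fixes d :: "'a::comm_ring_1"
  shows "d dvd x - y \<Longrightarrow> d dvd x ^ n - y ^ n"
  by (induction n) (auto intro: dvd_diff_mult)

lemma dvd_diff_prod:
  fixes d :: "'a::comm_ring_1"
  shows "(\<And>i. i \<in> A \<Longrightarrow> d dvd f i - g i) \<Longrightarrow> d dvd (\<Prod>i\<in>A. f i) - (\<Prod>i\<in>A. g i)"
  by (induction A rule: infinite_finite_induct) (auto intro: dvd_diff_mult)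

lemma eval_pol_dvd_diff:
  fixes d :: "'b::comm_ring_1"
  assumes "\<And>i. d dvd \<tau> i - \<sigma> i"
  shows "d dvd eval_pol \<tau> g - eval_pol \<sigma> g"
proof -
  have "d dvd eval_monom \<tau> m - eval_monom \<sigma> m" for m
    unfolding eval_monom_def by (intro dvd_diff_prod dvd_diff_power assms)
  then show ?thesis
    by (simp add: eval_pol_def dvd_sum flip: sum_subtractf right_diff_distrib)
qed

section \<open>The polynomial ring is a domain\<close>

definition rename_monom :: "('r::finite \<Rightarrow> 'k) \<Rightarrow> ('r \<Rightarrow>\<^sub>0 nat) \<Rightarrow> 'k \<Rightarrow>\<^sub>0 nat" where
  "rename_monom \<kappa> m = (\<Sum>i\<in>UNIV. Poly_Mapping.single (\<kappa> i) (Poly_Mapping.lookup m i))"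

lemma pvar_power: "pvar i ^ n = Poly_Mapping.single (Poly_Mapping.single i n) 1"
proof (induction n)
  case (Suc n)
  have "Poly_Mapping.single i (Suc n) = Poly_Mapping.single i n + Poly_Mapping.single i 1"
    by (simp flip: single_add)
  then show ?case using Suc by (simp add: pvar_def mult_single mult.commute)
qed simp

lemma prod_single_one:
  "(\<Prod>i\<in>A. Poly_Mapping.single (k i) (1::'b::comm_semiring_1))
     = Poly_Mapping.single (\<Sum>i\<in>A. k i :: 'a::comm_monoid_add) 1"
  by (induction A rule: infinite_finite_induct) (auto simp: mult_single)

lemma eval_monom_pvar: "eval_monom (\<lambda>i. pvar (\<kappa> i)) m = Poly_Mapping.single (rename_monom \<kappa> m) 1"
  by (simp add: eval_monom_def rename_monom_def pvar_power prod_single_one)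

lemma lookup_rename_monom:
  assumes "inj \<kappa>"
  shows "Poly_Mapping.lookup (rename_monom \<kappa> m) (\<kappa> j) = Poly_Mapping.lookup m j"
proof -
  have "Poly_Mapping.lookup (rename_monom \<kappa> m) (\<kappa> j) = (\<Sum>i\<in>UNIV. Poly_Mapping.lookup m i when i = j)"
    using assms by (simp add: rename_monom_def lookup_sum lookup_single inj_eq)
  then show ?thesis by (simp add: when_def)
qed

lemma inj_rename_monom: "inj \<kappa> \<Longrightarrow> inj (rename_monom \<kappa>)"
  by (rule injI, rule poly_mapping_eqI) (metis lookup_rename_monom)

lemma rename_monom_id [simp]: "rename_monom id m = m"
  by (rule poly_mapping_eqI) (use lookup_rename_monom[of id m] in simp)

lemma lookup_eval_pol_pvar:
  assumes "inj \<kappa>"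
  shows "Poly_Mapping.lookup (eval_pol (\<lambda>i. pvar (\<kappa> i)) g) (rename_monom \<kappa> m)
       = Poly_Mapping.lookup g m"
proof -
  have "eval_pol (\<lambda>i. pvar (\<kappa> i)) g
      = (\<Sum>m'\<in>Poly_Mapping.keys g. Poly_Mapping.single (rename_monom \<kappa> m') (Poly_Mapping.lookup g m'))"
    unfolding eval_pol_def eval_monom_pvar
    by (intro sum.cong refl) (simp add: of_int_pol mult_single)
  then have "Poly_Mapping.lookup (eval_pol (\<lambda>i. pvar (\<kappa> i)) g) (rename_monom \<kappa> m)
      = (\<Sum>m'\<in>Poly_Mapping.keys g. Poly_Mapping.lookup g m' when m' = m)"
    using inj_rename_monom[OF assms] by (simp add: lookup_sum lookup_single when_def inj_eq)
  also have "\<dots> = Poly_Mapping.lookup g m"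
    by (cases "m \<in> Poly_Mapping.keys g") (auto simp: when_def in_keys_iff)
  finally show ?thesis .
qed

lemma eval_pol_pvar_id [simp]: "eval_pol pvar g = g"
  using lookup_eval_pol_pvar[of id g] by (auto intro: poly_mapping_eqI)

lemma pol_mult_eq_0_iff [simp]: "(g :: 'r::finite pol) * h = 0 \<longleftrightarrow> g = 0 \<or> h = 0"
proof
  assume gh: "g * h = 0"
  obtain \<kappa> :: "'r \<Rightarrow> nat" where \<kappa>: "inj \<kappa>"
    using finite_imp_inj_to_nat_seg[of "UNIV :: 'r set"] by auto
  let ?emb = "eval_pol (\<lambda>i. pvar (\<kappa> i))"
  \<comment> \<open>with variables in the linear order \<open>nat\<close>, the library knows the polynomial ring to be
    an integral domain\<close>
  have "?emb g = 0 \<or> ?emb h = 0"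
    using gh by (metis eval_pol_mult eval_pol_zero mult_eq_0_iff)
  then show "g = 0 \<or> h = 0"
    by (metis lookup_eval_pol_pvar[OF \<kappa>] lookup_zero poly_mapping_eqI)
qed auto

lemma prod_pol_nonzero: "(\<And>x. x \<in> S \<Longrightarrow> f x \<noteq> 0) \<Longrightarrow> prod f S \<noteq> (0 :: 'r::finite pol)"
  by (induction S rule: infinite_finite_induct) auto

section \<open>Linear forms\<close>

lemma lin_eq_sum_pvar: "lin a = (\<Sum>i\<in>UNIV. of_int (a i) * pvar i)"
  unfolding lin_def pvar_def by (intro sum.cong refl) (simp add: of_int_pol mult_single)

lemma eval_pol_lin: "eval_pol \<sigma> (lin a) = (\<Sum>i\<in>UNIV. of_int (a i) * \<sigma> i)"
  by (simp add: lin_eq_sum_pvar eval_pol_sum eval_pol_mult)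

lemma lin_add: "lin (\<lambda>i. a i + b i) = lin a + lin b"
  by (simp add: lin_eq_sum_pvar sum.distrib algebra_simps)

lemma lin_uminus: "lin (- a) = - lin a"
  by (simp add: lin_eq_sum_pvar sum_negf fun_Compl_def)

lemma lookup_lin: "Poly_Mapping.lookup (lin a) (Poly_Mapping.single i 1) = a i"
proof -
  have "Poly_Mapping.single j (1::nat) = Poly_Mapping.single i 1 \<longleftrightarrow> j = i" for j
    by (metis lookup_single_eq lookup_single_not_eq zero_neq_one)
  then show ?thesis
    by (simp add: lin_def lookup_sum lookup_single when_def)
qed

lemma lin_eq_0_iff: "lin a = (0 :: 'r::finite pol) \<longleftrightarrow> (\<forall>i. a i = 0)"
proof
  show "lin a = 0 \<Longrightarrow> \<forall>i. a i = 0"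
    by (metis lookup_lin lookup_zero)
qed (simp add: lin_def)

lemma lin_dvd_lin_imp_multiple:
  fixes a b :: "'r::finite \<Rightarrow> int"
  assumes "lin a dvd lin b"
  shows "\<exists>k. \<forall>l. b l = k * a l"
proof -
  obtain q where q: "lin b = lin a * q" using assms by (auto elim: dvdE)
  have "b l = Poly_Mapping.lookup q 0 * a l" for l
  proof -
    \<comment> \<open>on the \<open>l\<close>-th coordinate axis the identity \<open>lin b = lin a * q\<close> becomes one in \<open>\<int>[X]\<close>,
      whose linear coefficients give \<open>b l = a l * q(0)\<close>\<close>
    let ?\<sigma> = "\<lambda>i. if i = l then [:0, 1:] else (0 :: int poly)"
    have "eval_pol ?\<sigma> (lin c) = [:0, c l:]" for c
      by (simp add: eval_pol_lin if_distrib of_int_poly cong: if_cong)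
    then have "[:0, b l:] = [:0, a l:] * eval_pol ?\<sigma> q"
      using q by (metis eval_pol_mult)
    then have "b l = coeff ([:0, a l:] * eval_pol ?\<sigma> q) 1"
      by (metis coeff_pCons_0 coeff_pCons_Suc One_nat_def)
    also have "\<dots> = a l * coeff (eval_pol ?\<sigma> q) 0"
      by (simp add: mult_pCons_left coeff_pCons)
    also have "coeff (eval_pol ?\<sigma> q) 0 = Poly_Mapping.lookup q 0"
    proof -
      have "(\<lambda>i. poly (?\<sigma> i) 0) = (\<lambda>_. 0)" by auto
      then show ?thesis by (simp add: poly_0_coeff_0 [symmetric] poly_eval_pol eval_pol_const_term)
    qed
    finally show ?thesis by simp
  qed
  then show ?thesis by blast
qed

section \<open>Primitive linear forms\<close>

text \<open>The library's \<open>prime_elem\<close> needs class \<open>semidom\<close>, which \<open>'r pol\<close> does not belong to for a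
  merely finite \<open>'r\<close>.\<close>
definition prime_element :: "'a::comm_ring_1 \<Rightarrow> bool" where
  "prime_element p \<longleftrightarrow> \<not> p dvd 1 \<and> (\<forall>g h. p dvd g * h \<longrightarrow> p dvd g \<or> p dvd h)"

definition primitive :: "('r \<Rightarrow> int) \<Rightarrow> bool" where
  "primitive a \<longleftrightarrow> (\<forall>d. (\<forall>i. d dvd a i) \<longrightarrow> d dvd 1)"

lemma primitive_if_Gcd_eq_1: "Gcd (range a) = 1 \<Longrightarrow> primitive a"
  unfolding primitive_def by (metis Gcd_greatest rangeE)

lemma prime_element_uminus: "prime_element (- p) \<longleftrightarrow> prime_element p"
  by (simp add: prime_element_def)

lemma prime_element_dvd_prod:
  assumes "prime_element p" "finite S" "p dvd (\<Prod>x\<in>S. f x)"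
  shows "\<exists>x\<in>S. p dvd f x"
  using assms(2,3)
proof (induction S rule: finite_induct)
  case empty
  then show ?case using assms(1) by (simp add: prime_element_def)
next
  case (insert x S)
  then have "p dvd f x \<or> p dvd (\<Prod>x\<in>S. f x)"
    using assms(1) by (simp add: prime_element_def)
  then show ?case using insert by blast
qed

lemma prod_prime_elements_dvd:
  assumes "finite S" "\<And>x. x \<in> S \<Longrightarrow> prime_element (f x)"
    and "\<And>x y. x \<in> S \<Longrightarrow> y \<in> S \<Longrightarrow> x \<noteq> y \<Longrightarrow> \<not> f x dvd f y"
    and "\<And>x. x \<in> S \<Longrightarrow> f x dvd d"
  shows "(\<Prod>x\<in>S. f x) dvd d"
  using assms
proof (induction S rule: finite_induct)
  case (insert x S)
  obtain m where m: "d = (\<Prod>x\<in>S. f x) * m"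
    using insert by (auto elim: dvdE)
  have "\<not> f x dvd (\<Prod>x\<in>S. f x)"
    using prime_element_dvd_prod[of "f x" S f] insert by blast
  moreover have "f x dvd (\<Prod>x\<in>S. f x) * m"
    using insert.prems(3)[of x] m by simp
  ultimately have "f x dvd m"
    using insert.prems(1) by (auto simp: prime_element_def)
  then show ?case using m insert.hyps by (simp add: mult_dvd_mono mult.commute)
qed simp

lemma prime_element_if_eval_pol:
  fixes \<sigma> \<sigma>' :: "'r::finite \<Rightarrow> 'r pol"
  assumes inv: "\<And>g. eval_pol \<sigma>' (eval_pol \<sigma> g) = g"
    and prime: "prime_element (eval_pol \<sigma> p)"
  shows "prime_element p"
  unfolding prime_element_def
proof (intro conjI allI impI)
  show "\<not> p dvd 1"
    using prime eval_pol_dvd[of p 1 \<sigma>] by (auto simp: prime_element_def)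
next
  fix g h
  assume "p dvd g * h"
  then have "eval_pol \<sigma> p dvd eval_pol \<sigma> g * eval_pol \<sigma> h"
    by (metis eval_pol_dvd eval_pol_mult)
  then have "eval_pol \<sigma> p dvd eval_pol \<sigma> g \<or> eval_pol \<sigma> p dvd eval_pol \<sigma> h"
    using prime by (simp add: prime_element_def)
  then show "p dvd g \<or> p dvd h"
    by (metis inv eval_pol_dvd)
qed

lemma sum_fun_upd_diff:
  fixes \<tau> :: "'r::finite \<Rightarrow> 'b::comm_ring_1"
  shows "(\<Sum>l\<in>UNIV. of_int (c l) * (\<tau>(j := t)) l)
       = (\<Sum>l\<in>UNIV. of_int (c l) * \<tau> l) + of_int (c j) * (t - \<tau> j)"
proof -
  have "(\<Sum>l\<in>UNIV. of_int (c l) * (\<tau>(j := t)) l) - (\<Sum>l\<in>UNIV. of_int (c l) * \<tau> l)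
      = (\<Sum>l\<in>UNIV. if l = j then of_int (c j) * (t - \<tau> j) else 0)"
    by (simp only: flip: sum_subtractf) (intro sum.cong refl, auto simp: algebra_simps)
  then show ?thesis by (simp add: algebra_simps)
qed

text \<open>The substitution \<open>x\<^sub>j \<mapsto> x\<^sub>j - lin a\<close> kills \<open>lin a\<close> and is the identity modulo
  \<open>lin a\<close>; so divisibility by \<open>lin a\<close> is the kernel of an evaluation into a domain.\<close>
lemma prime_element_lin_unit:
  assumes "a j = 1"
  shows "prime_element (lin a :: 'r::finite pol)"
proof -
  define \<sigma> where "\<sigma> = pvar(j := pvar j - lin a)"
  have kills: "eval_pol \<sigma> (lin a) = 0"
    unfolding eval_pol_lin \<sigma>_def sum_fun_upd_diff using assms by (simp add: lin_eq_sum_pvar)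
  have "lin a dvd eval_pol pvar g - eval_pol \<sigma> g" for g
    by (rule eval_pol_dvd_diff) (simp add: \<sigma>_def)
  then have kernel: "lin a dvd g \<longleftrightarrow> eval_pol \<sigma> g = 0" for g
    by (auto simp: eval_pol_mult kills) (metis diff_zero)
  show ?thesis
    unfolding prime_element_def kernel by (simp add: eval_pol_mult)
qed

lemma eval_pol_elementary_lin:
  assumes "i \<noteq> j"
  shows "eval_pol (pvar(j := pvar j + of_int k * pvar i)) (lin a) = lin (a(i := a i + k * a j))"
proof -
  have "a(i := a i + k * a j) = (\<lambda>l. a l + (if l = i then k * a j else 0))"
    by (auto simp: fun_eq_iff)
  moreover have "lin (\<lambda>l. if l = i then c else 0) = of_int c * pvar i" for c
  proof -
    have "lin (\<lambda>l. if l = i then c else 0) = (\<Sum>l\<in>UNIV. if l = i then of_int c * pvar i else 0)"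
      unfolding lin_eq_sum_pvar by (intro sum.cong refl) auto
    then show ?thesis by simp
  qed
  ultimately show ?thesis
    unfolding eval_pol_lin sum_fun_upd_diff using assms by (simp add: lin_add lin_eq_sum_pvar)
qed

lemma eval_pol_elementary_inverse:
  assumes "i \<noteq> j"
  shows "eval_pol (pvar(j := pvar j - of_int k * pvar i))
           (eval_pol (pvar(j := pvar j + of_int k * pvar i)) g) = (g :: 'r::finite pol)"
proof -
  have "(\<lambda>l. eval_pol (pvar(j := pvar j - of_int k * pvar i)) ((pvar(j := pvar j + of_int k * pvar i)) l))
      = pvar"
    using assms by (auto simp: fun_eq_iff eval_pol_add eval_pol_mult)
  then show ?thesis by (simp add: eval_pol_eval_pol)
qed

lemma primitive_elementary_update:
  assumes "primitive a" "i \<noteq> j"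
  shows "primitive (a(i := a i + k * a j))"
  unfolding primitive_def
proof (intro allI impI)
  fix d :: int
  assume d: "\<forall>l. d dvd (a(i := a i + k * a j)) l"
  then have "d dvd (a i + k * a j) - k * a j"
    using assms(2) by (metis dvd_diff dvd_mult fun_upd_other fun_upd_same)
  then have "d dvd a l" for l
    using d[rule_format, of l] by (cases "l = i") auto
  then show "d dvd 1" using assms(1) unfolding primitive_def by blast
qed

lemma primitive_reducible:
  fixes a :: "'r \<Rightarrow> int"
  assumes "primitive a" "\<forall>l. \<bar>a l\<bar> \<noteq> 1"
  obtains i j k where "i \<noteq> j" "\<bar>k\<bar> = 1" "\<bar>a i + k * a j\<bar> < \<bar>a i\<bar>"
proof -
  have "\<not> (\<forall>l. (2::int) dvd a l)"
    using assms(1) by (auto simp: primitive_def)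
  then obtain i where ai: "a i \<noteq> 0" by (metis dvd_0_right)
  have "\<not> (\<forall>l. a i dvd a l)"
    using assms ai by (auto simp: primitive_def zdvd1_eq)
  then obtain j where "\<not> a i dvd a j" by blast
  then have j: "j \<noteq> i" "a j \<noteq> 0" by auto
  obtain i' j' where ij': "i' \<noteq> j'" "a j' \<noteq> 0" "\<bar>a j'\<bar> \<le> \<bar>a i'\<bar>"
  proof (cases "\<bar>a j\<bar> \<le> \<bar>a i\<bar>")
    case True
    then show ?thesis using that[of i j] j by auto
  next
    case False
    then show ?thesis using that[of j i] j ai by auto
  qed
  have "\<bar>a i' + 1 * a j'\<bar> < \<bar>a i'\<bar> \<or> \<bar>a i' + (-1) * a j'\<bar> < \<bar>a i'\<bar>"
    using ij'(2,3) by arith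
  then show ?thesis
  proof
    assume "\<bar>a i' + 1 * a j'\<bar> < \<bar>a i'\<bar>"
    then show ?thesis by (rule that[OF ij'(1), rotated]) simp
  next
    assume "\<bar>a i' + (-1) * a j'\<bar> < \<bar>a i'\<bar>"
    then show ?thesis by (rule that[OF ij'(1), rotated]) simp
  qed
qed

text \<open>Euclid's algorithm on the coefficient vector, realised by invertible substitutions,
  reduces a primitive vector to one with a unit entry.\<close>
theorem prime_element_lin:
  fixes a :: "'r::finite \<Rightarrow> int"
  assumes "primitive a"
  shows "prime_element (lin a)"
  using assms
proof (induction "\<Sum>l\<in>UNIV. nat \<bar>a l\<bar>" arbitrary: a rule: less_induct)
  case less
  show ?case
  proof (cases "\<exists>j. \<bar>a j\<bar> = 1")
    case True
    then obtain j where "a j = 1 \<or> (- a) j = 1"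
      by (auto simp: fun_Compl_def abs_if split: if_splits)
    then show ?thesis
    proof
      assume "(- a) j = 1"
      then have "prime_element (lin (- a))" by (rule prime_element_lin_unit)
      then show ?thesis by (simp add: lin_uminus prime_element_uminus)
    qed (rule prime_element_lin_unit)
  next
    case False
    then have "\<forall>l. \<bar>a l\<bar> \<noteq> 1" by blast
    then obtain i j k where ij: "i \<noteq> j" "\<bar>k\<bar> = 1" "\<bar>a i + k * a j\<bar> < \<bar>a i\<bar>"
      by (rule primitive_reducible[OF less.prems])
    have "(\<Sum>l\<in>UNIV. nat \<bar>(a(i := a i + k * a j)) l\<bar>) < (\<Sum>l\<in>UNIV. nat \<bar>a l\<bar>)"
    proof (rule sum_strict_mono_ex1)
      show "\<forall>l\<in>UNIV. nat \<bar>(a(i := a i + k * a j)) l\<bar> \<le> nat \<bar>a l\<bar>"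
        using ij(3) by simp
      show "\<exists>l\<in>UNIV. nat \<bar>(a(i := a i + k * a j)) l\<bar> < nat \<bar>a l\<bar>"
        using ij(3) by (intro bexI[of _ i]) auto
    qed simp
    then have "prime_element (lin (a(i := a i + k * a j)))"
      by (rule less.hyps) (rule primitive_elementary_update[OF less.prems ij(1)])
    then have "prime_element (eval_pol (pvar(j := pvar j + of_int k * pvar i)) (lin a))"
      by (simp only: eval_pol_elementary_lin[OF ij(1)])
    then show ?thesis
      by (rule prime_element_if_eval_pol[OF eval_pol_elementary_inverse[OF ij(1)]])
  qed
qed

lemma lin_dvd_primitive:
  assumes "lin a dvd lin b" "primitive b"
  shows "b = a \<or> b = - a"
proof -
  obtain k where k: "\<forall>l. b l = k * a l" using lin_dvd_lin_imp_multiple[OF assms(1)] by blast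
  then have "k dvd 1" using assms(2) unfolding primitive_def by (metis dvd_triv_left)
  then have "k = 1 \<or> k = -1" by (simp add: zdvd1_eq abs_if split: if_splits)
  then show ?thesis using k by (auto simp: fun_eq_iff)
qed

lemma lin_primitive_nonzero: "primitive a \<Longrightarrow> lin a \<noteq> (0 :: 'r::finite pol)"
  unfolding lin_eq_0_iff primitive_def by (metis dvd_0_right odd_one)

section \<open>GKM graphs and their cohomology\<close>

locale gkm =
  fixes n :: nat and V :: "'v set" and E :: "'e set" and src tgt :: "'e \<Rightarrow> 'v"
    and rv :: "'e \<Rightarrow> 'e" and \<alpha> :: "'e \<Rightarrow> ('r::finite \<Rightarrow> int)"
  assumes gkm_graph: "gkm_graph n V E src tgt rv \<alpha>"
begin

abbreviation cohom :: "('v \<Rightarrow> 'r pol) set" where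
  "cohom \<equiv> gkm_cohom V E src tgt \<alpha>"

abbreviation edge_prod :: "'v \<Rightarrow> 'v \<Rightarrow> 'r pol" where
  "edge_prod \<equiv> P_prod E src tgt \<alpha>"

lemma finite_V: "finite V" and finite_E: "finite E"
  using gkm_graph by (auto simp: gkm_graph_def)

lemma finite_out_edges: "finite (out_edges E src p)"
  using finite_E by (simp add: out_edges_def)

lemma edgeD:
  assumes "e \<in> E"
  shows "src e \<in> V" "tgt e \<in> V" "src e \<noteq> tgt e" "rv e \<in> E"
    "src (rv e) = tgt e" "tgt (rv e) = src e"
  using gkm_graph assms by (auto simp: gkm_graph_def)

lemma label_rv: "e \<in> E \<Longrightarrow> lin (\<alpha> (rv e)) = lin (\<alpha> e) \<or> lin (\<alpha> (rv e)) = - lin (\<alpha> e)"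
  using gkm_graph by (auto simp: gkm_graph_def lin_uminus)

lemma primitive_label: "e \<in> E \<Longrightarrow> primitive (\<alpha> e)"
  using gkm_graph by (auto simp: gkm_graph_def intro: primitive_if_Gcd_eq_1)

lemma prime_label: "e \<in> E \<Longrightarrow> prime_element (lin (\<alpha> e))"
  by (rule prime_element_lin[OF primitive_label])

lemma label_nonzero: "e \<in> E \<Longrightarrow> lin (\<alpha> e) \<noteq> 0"
  by (rule lin_primitive_nonzero[OF primitive_label])

lemma labels_independent:
  assumes "e \<in> E" "e' \<in> E" "e \<noteq> e'" "src e = src e'" "\<forall>i. a * \<alpha> e i + b * \<alpha> e' i = 0"
  shows "a = 0 \<and> b = 0"
  using gkm_graph assms unfolding gkm_graph_def by blast

lemma label_not_dvd:
  assumes "e \<in> E" "e' \<in> E" "e \<noteq> e'" "src e = src e'"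
  shows "\<not> lin (\<alpha> e) dvd lin (\<alpha> e')"
proof
  assume "lin (\<alpha> e) dvd lin (\<alpha> e')"
  then have "\<alpha> e' = \<alpha> e \<or> \<alpha> e' = - \<alpha> e"
    using lin_dvd_primitive primitive_label[OF assms(2)] by blast
  then have "(\<forall>i. 1 * \<alpha> e i + (-1) * \<alpha> e' i = 0) \<or> (\<forall>i. 1 * \<alpha> e i + 1 * \<alpha> e' i = 0)"
    by auto
  then show False
    using labels_independent[OF assms, of 1 "-1"] labels_independent[OF assms, of 1 1] by (metis zero_neq_one)
qed

lemma edge_eq_if_label_assoc:
  assumes "e \<in> E" "e' \<in> E" "src e = src e'"
    and "lin (\<alpha> e) = lin (\<alpha> e') \<or> lin (\<alpha> e) = - lin (\<alpha> e')"
  shows "e = e'"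
  using label_not_dvd[of e' e] assms by (metis dvd_refl dvd_minus_iff)

lemma cohom_vanishes: "f \<in> cohom \<Longrightarrow> v \<notin> V \<Longrightarrow> f v = 0"
  by (simp add: gkm_cohom_def)

lemma cohom_edge_dvd: "f \<in> cohom \<Longrightarrow> e \<in> E \<Longrightarrow> lin (\<alpha> e) dvd f (src e) - f (tgt e)"
  by (simp add: gkm_cohom_def)

text \<open>Distinct edges between two vertices carry pairwise non-associated prime labels, so the
  divisibility conditions along them combine into one by their product.\<close>
lemma edge_prod_dvd_iff:
  "edge_prod p q dvd d \<longleftrightarrow> (\<forall>e\<in>E. src e = p \<and> tgt e = q \<longrightarrow> lin (\<alpha> e) dvd d)"
proof (intro iffI ballI impI)
  fix e assume "edge_prod p q dvd d" "e \<in> E" "src e = p \<and> tgt e = q"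
  moreover from this have "lin (\<alpha> e) dvd edge_prod p q"
    unfolding P_prod_def by (intro dvd_prodI) (use finite_E in auto)
  ultimately show "lin (\<alpha> e) dvd d" by (blast intro: dvd_trans)
next
  assume dvd: "\<forall>e\<in>E. src e = p \<and> tgt e = q \<longrightarrow> lin (\<alpha> e) dvd d"
  let ?pq = "{e \<in> E. src e = p \<and> tgt e = q}"
  show "edge_prod p q dvd d"
    unfolding P_prod_def
  proof (rule prod_prime_elements_dvd)
    show "finite ?pq" using finite_E by simp
    show "prime_element (lin (\<alpha> e))" if "e \<in> ?pq" for e
      using that prime_label by blast
    show "\<not> lin (\<alpha> e) dvd lin (\<alpha> e')" if "e \<in> ?pq" "e' \<in> ?pq" "e \<noteq> e'" for e e'
      using that label_not_dvd by auto
    show "lin (\<alpha> e) dvd d" if "e \<in> ?pq" for e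
      using that dvd by blast
  qed
qed

lemma cohom_iff_edge_prod:
  "f \<in> cohom \<longleftrightarrow>
     (\<forall>v. v \<notin> V \<longrightarrow> f v = 0) \<and> (\<forall>p\<in>V. \<forall>q\<in>V. p \<noteq> q \<longrightarrow> edge_prod p q dvd f p - f q)"
  unfolding gkm_cohom_def edge_prod_dvd_iff using edgeD(1-3) by blast

lemma cohom_add: "f \<in> cohom \<Longrightarrow> g \<in> cohom \<Longrightarrow> (\<lambda>v. f v + g v) \<in> cohom"
  unfolding gkm_cohom_def by (simp add: add_diff_add)

lemma cohom_mult: "f \<in> cohom \<Longrightarrow> g \<in> cohom \<Longrightarrow> (\<lambda>v. f v * g v) \<in> cohom"
  unfolding gkm_cohom_def by (auto intro: dvd_diff_mult)

lemma cohom_smult: "f \<in> cohom \<Longrightarrow> (\<lambda>v. c * f v) \<in> cohom"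
  unfolding gkm_cohom_def by (auto simp flip: right_diff_distrib)

lemma one_on_cohom: "one_on V \<in> cohom"
  unfolding gkm_cohom_def one_on_def using edgeD by auto

lemma zero_cohom: "(\<lambda>v. 0) \<in> cohom"
  by (simp add: gkm_cohom_def)

lemma indicator_cohom:
  assumes "S \<subseteq> V" and boundary: "\<And>e. e \<in> E \<Longrightarrow> src e \<in> S \<Longrightarrow> tgt e \<notin> S \<Longrightarrow> lin (\<alpha> e) dvd c"
  shows "(\<lambda>v. if v \<in> S then c else 0) \<in> cohom"
  unfolding gkm_cohom_def
proof (intro CollectI conjI allI impI ballI)
  fix e assume e: "e \<in> E"
  have "lin (\<alpha> e) dvd c" if "tgt e \<in> S" "src e \<notin> S"
  proof -
    have "lin (\<alpha> (rv e)) dvd c" using boundary[OF edgeD(4)[OF e]] that edgeD[OF e] by simp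
    then show ?thesis using label_rv[OF e] by auto
  qed
  then show "lin (\<alpha> e) dvd (if src e \<in> S then c else 0) - (if tgt e \<in> S then c else 0)"
    using boundary[OF e] by auto
qed (use assms(1) in auto)

definition euler_class :: "'v \<Rightarrow> 'r pol" where
  "euler_class p = (\<Prod>e\<in>out_edges E src p. lin (\<alpha> e))"

definition thom_class :: "'v \<Rightarrow> 'v \<Rightarrow> 'r pol" where
  "thom_class p = (\<lambda>v. if v \<in> {p} then euler_class p else 0)"

lemma euler_class_nonzero: "euler_class p \<noteq> 0"
  unfolding euler_class_def by (rule prod_pol_nonzero) (simp add: out_edges_def label_nonzero)

lemma thom_class_cohom: "p \<in> V \<Longrightarrow> thom_class p \<in> cohom"
  unfolding thom_class_def euler_class_def out_edges_def
  by (rule indicator_cohom) (use finite_E in \<open>auto intro: dvd_prodI\<close>)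

definition euler_class_except :: "'v \<Rightarrow> 'e \<Rightarrow> 'r pol" where
  "euler_class_except p e = (\<Prod>e'\<in>out_edges E src p - {e}. lin (\<alpha> e'))"

text \<open>The analogue of the Thom class of the invariant 2-sphere represented by the edge \<open>e\<close>.\<close>
definition edge_class :: "'e \<Rightarrow> 'v \<Rightarrow> 'r pol" where
  "edge_class e = (\<lambda>v. if v \<in> {src e, tgt e}
     then euler_class_except (src e) e * euler_class_except (tgt e) (rv e) else 0)"

lemma label_dvd_euler_class_except:
  "e' \<in> E \<Longrightarrow> src e' = p \<Longrightarrow> e' \<noteq> e \<Longrightarrow> lin (\<alpha> e') dvd euler_class_except p e"
  unfolding euler_class_except_def
  by (rule dvd_prodI) (use finite_out_edges in \<open>auto simp: out_edges_def\<close>)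

lemma edge_class_cohom:
  assumes e: "e \<in> E"
  shows "edge_class e \<in> cohom"
  unfolding edge_class_def
proof (rule indicator_cohom)
  show "{src e, tgt e} \<subseteq> V" using edgeD[OF e] by auto
  fix e' assume e': "e' \<in> E" "src e' \<in> {src e, tgt e}" "tgt e' \<notin> {src e, tgt e}"
  then have "e' \<noteq> e" "e' \<noteq> rv e" using edgeD[OF e] by auto
  then show "lin (\<alpha> e') dvd euler_class_except (src e) e * euler_class_except (tgt e) (rv e)"
    using e' label_dvd_euler_class_except by (metis dvd_mult dvd_mult2 insert_iff singletonD)
qed

lemma label_not_dvd_euler_class_except:
  assumes e: "e \<in> E"
  shows "\<not> lin (\<alpha> e) dvd euler_class_except (src e) e"
proof
  assume dvd: "lin (\<alpha> e) dvd euler_class_except (src e) e"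
  obtain e' where "e' \<in> E" "src e' = src e" "e' \<noteq> e" "lin (\<alpha> e) dvd lin (\<alpha> e')"
    using prime_element_dvd_prod[OF prime_label[OF e] _ dvd[unfolded euler_class_except_def]]
      finite_out_edges by (auto simp: out_edges_def)
  then show False
    using label_not_dvd[OF e] by metis
qed

lemma label_not_dvd_edge_class:
  assumes e: "e \<in> E"
  shows "\<not> lin (\<alpha> e) dvd euler_class_except (src e) e * euler_class_except (tgt e) (rv e)"
proof
  assume "lin (\<alpha> e) dvd euler_class_except (src e) e * euler_class_except (tgt e) (rv e)"
  then have "lin (\<alpha> e) dvd euler_class_except (src e) e \<or>
      lin (\<alpha> e) dvd euler_class_except (src (rv e)) (rv e)"
    using prime_label[OF e] edgeD(5)[OF e] by (simp add: prime_element_def)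
  moreover have "lin (\<alpha> e) dvd x \<longleftrightarrow> lin (\<alpha> (rv e)) dvd x" for x
    using label_rv[OF e] by auto
  ultimately show False
    using label_not_dvd_euler_class_except edgeD(4) e by blast
qed

text \<open>The Thom class at \<open>p\<close> yields an edge \<open>e\<^sub>0\<close> at \<open>p\<close> whose label is associated to
  \<open>lin b\<close>. Were its other end not \<open>s\<close>, \<open>lin b\<close> would divide the value of the edge class of \<open>e\<^sub>0\<close>.\<close>
lemma edge_if_dvd_all:
  assumes p: "p \<in> V" and s: "s \<noteq> p" and b: "primitive b"
    and dvd: "\<And>f. f \<in> cohom \<Longrightarrow> lin b dvd f p - f s"
  shows "\<exists>e\<in>E. src e = p \<and> tgt e = s \<and> (\<alpha> e = b \<or> \<alpha> e = - b)"
proof -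
  have "lin b dvd euler_class p"
    using dvd[OF thom_class_cohom[OF p]] s by (simp add: thom_class_def)
  then obtain e0 where e0: "e0 \<in> E" "src e0 = p" "lin b dvd lin (\<alpha> e0)"
    using prime_element_dvd_prod[OF prime_element_lin[OF b] finite_out_edges]
    unfolding euler_class_def out_edges_def by auto
  have label: "\<alpha> e0 = b \<or> \<alpha> e0 = - b"
    using lin_dvd_primitive[OF e0(3) primitive_label[OF e0(1)]] by (auto simp: fun_eq_iff)
  have "tgt e0 = s"
  proof (rule ccontr)
    assume "tgt e0 \<noteq> s"
    then have "lin b dvd euler_class_except (src e0) e0 * euler_class_except (tgt e0) (rv e0)"
      using dvd[OF edge_class_cohom[OF e0(1)]] s e0(2) by (simp add: edge_class_def)
    moreover have "lin (\<alpha> e0) dvd lin b"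
      using label by (auto simp: lin_uminus)
    ultimately show False
      using label_not_dvd_edge_class[OF e0(1)] dvd_trans by blast
  qed
  then show ?thesis
    using e0 label by blast
qed

end

section \<open>Isomorphisms\<close>

lemma prod_eq_up_to_sign_pointwise:
  fixes f g :: "'a \<Rightarrow> 'c::comm_ring_1"
  assumes "\<And>x. x \<in> A \<Longrightarrow> f x = g x \<or> f x = - g x"
  shows "prod f A = prod g A \<or> prod f A = - prod g A"
  using assms
proof (induction A rule: infinite_finite_induct)
  case (insert x A)
  then have "f x = g x \<or> f x = - g x" "prod f A = prod g A \<or> prod f A = - prod g A"
    by blast+
  then show ?case using insert.hyps by auto
qed simp_all

lemma prod_eq_up_to_sign:
  fixes f :: "'a \<Rightarrow> 'c::comm_ring_1" and g :: "'b \<Rightarrow> 'c"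
  assumes "finite X" "finite Y"
    and X_in_Y: "\<And>x. x \<in> X \<Longrightarrow> \<exists>y\<in>Y. f x = g y \<or> f x = - g y"
    and Y_in_X: "\<And>y. y \<in> Y \<Longrightarrow> \<exists>x\<in>X. f x = g y \<or> f x = - g y"
    and distinct_X: "\<And>x x'. x \<in> X \<Longrightarrow> x' \<in> X \<Longrightarrow> f x = f x' \<or> f x = - f x' \<Longrightarrow> x = x'"
    and distinct_Y: "\<And>y y'. y \<in> Y \<Longrightarrow> y' \<in> Y \<Longrightarrow> g y = g y' \<or> g y = - g y' \<Longrightarrow> y = y'"
  shows "prod f X = prod g Y \<or> prod f X = - prod g Y"
proof -
  define h where "h y = (SOME x. x \<in> X \<and> (f x = g y \<or> f x = - g y))" for y
  have h: "h y \<in> X \<and> (f (h y) = g y \<or> f (h y) = - g y)" if "y \<in> Y" for y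
    unfolding h_def using Y_in_X[OF that] by (rule someI2_bex) auto
  have "bij_betw h Y X"
  proof (rule bij_betw_imageI)
    show "inj_on h Y"
    proof (rule inj_onI)
      fix y y' assume "y \<in> Y" "y' \<in> Y" "h y = h y'"
      then show "y = y'"
        using h[of y] h[of y'] distinct_Y[of y y'] by (auto simp: minus_equation_iff)
    qed
    show "h ` Y = X"
    proof
      show "X \<subseteq> h ` Y"
      proof
        fix x assume x: "x \<in> X"
        then obtain y where y: "y \<in> Y" "f x = g y \<or> f x = - g y" using X_in_Y by blast
        then have "h y = x"
          using h[OF y(1)] distinct_X[OF _ x, of "h y"] by (auto simp: minus_equation_iff)
        then show "x \<in> h ` Y" using y by blast
      qed
    qed (use h in auto)
  qed
  then have "prod f X = (\<Prod>y\<in>Y. f (h y))"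
    by (simp add: prod.reindex_bij_betw)
  moreover have "(\<Prod>y\<in>Y. f (h y)) = prod g Y \<or> (\<Prod>y\<in>Y. f (h y)) = - prod g Y"
    using h by (intro prod_eq_up_to_sign_pointwise) blast
  ultimately show ?thesis by simp
qed

lemma
  assumes "alg_iso V A W B \<Phi>"
  shows alg_iso_bij: "bij_betw \<Phi> A B"
    and alg_iso_add: "f \<in> A \<Longrightarrow> g \<in> A \<Longrightarrow> \<Phi> (\<lambda>v. f v + g v) = (\<lambda>w. \<Phi> f w + \<Phi> g w)"
    and alg_iso_mult: "f \<in> A \<Longrightarrow> g \<in> A \<Longrightarrow> \<Phi> (\<lambda>v. f v * g v) = (\<lambda>w. \<Phi> f w * \<Phi> g w)"
    and alg_iso_smult: "f \<in> A \<Longrightarrow> \<Phi> (\<lambda>v. c * f v) = (\<lambda>w. c * \<Phi> f w)"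
    and alg_iso_one: "\<Phi> (one_on V) = one_on W"
  using assms by (simp_all add: alg_iso_def)

locale gkm_pair = G: gkm n V E src tgt rv \<alpha> + H: gkm n' V' E' src' tgt' rv' \<alpha>'
  for n :: nat and V :: "'v set" and E :: "'e set" and src tgt :: "'e \<Rightarrow> 'v" and rv
    and \<alpha> :: "'e \<Rightarrow> ('r::finite \<Rightarrow> int)"
    and n' :: nat and V' :: "'w set" and E' :: "'f set" and src' tgt' :: "'f \<Rightarrow> 'w" and rv'
    and \<alpha>' :: "'f \<Rightarrow> ('r \<Rightarrow> int)"
begin

lemma pullback_cohom:
  assumes \<phi>: "bij_betw \<phi> V' V"
    and dvd: "\<And>p q. p \<in> V' \<Longrightarrow> q \<in> V' \<Longrightarrow> p \<noteq> q \<Longrightarrow> H.edge_prod p q dvd G.edge_prod (\<phi> p) (\<phi> q)"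
    and f: "f \<in> G.cohom"
  shows "(\<lambda>w. if w \<in> V' then f (\<phi> w) else 0) \<in> H.cohom"
  unfolding H.cohom_iff_edge_prod
proof (intro conjI allI impI ballI)
  fix p q assume pq: "p \<in> V'" "q \<in> V'" "p \<noteq> q"
  then have "G.edge_prod (\<phi> p) (\<phi> q) dvd f (\<phi> p) - f (\<phi> q)"
    using f \<phi> unfolding G.cohom_iff_edge_prod by (metis bij_betw_apply bij_betw_imp_inj_on inj_onD)
  then show "H.edge_prod p q dvd (if p \<in> V' then f (\<phi> p) else 0) - (if q \<in> V' then f (\<phi> q) else 0)"
    using dvd[OF pq] pq by (auto intro: dvd_trans)
qed simp

lemma alg_iso_if_gkm_iso:
  assumes "gkm_iso V' E' src' tgt' \<alpha>' V E src tgt \<alpha> \<phi>"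
  shows "\<exists>\<Phi>. alg_iso V G.cohom V' H.cohom \<Phi>"
proof -
  interpret swap: gkm_pair n' V' E' src' tgt' rv' \<alpha>' n V E src tgt rv \<alpha> ..
  have \<phi>: "bij_betw \<phi> V' V"
    and sign: "\<And>p q. p \<in> V' \<Longrightarrow> q \<in> V' \<Longrightarrow> p \<noteq> q \<Longrightarrow>
      G.edge_prod (\<phi> p) (\<phi> q) = H.edge_prod p q \<or> G.edge_prod (\<phi> p) (\<phi> q) = - H.edge_prod p q"
    using assms by (auto simp: gkm_iso_def)
  define \<psi> where "\<psi> = inv_into V' \<phi>"
  have \<psi>: "bij_betw \<psi> V V'"
    unfolding \<psi>_def by (rule bij_betw_inv_into[OF \<phi>])
  have \<phi>\<psi>: "\<phi> (\<psi> v) = v" if "v \<in> V" for v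
    unfolding \<psi>_def using \<phi> that by (meson bij_betw_inv_into_right)
  have \<psi>\<phi>: "\<psi> (\<phi> w) = w" if "w \<in> V'" for w
    unfolding \<psi>_def using \<phi> that by (meson bij_betw_inv_into_left)
  define \<Phi> where "\<Phi> f = (\<lambda>w. if w \<in> V' then f (\<phi> w) else 0)" for f :: "'v \<Rightarrow> 'r pol"
  define \<Psi> where "\<Psi> g = (\<lambda>v. if v \<in> V then g (\<psi> v) else 0)" for g :: "'w \<Rightarrow> 'r pol"
  have "\<Phi> f \<in> H.cohom" if "f \<in> G.cohom" for f
    unfolding \<Phi>_def by (rule pullback_cohom[OF \<phi> _ that]) (use sign in force)
  moreover have "\<Psi> g \<in> G.cohom" if "g \<in> H.cohom" for g
    unfolding \<Psi>_def
  proof (rule swap.pullback_cohom[OF \<psi> _ that])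
    fix p q assume "p \<in> V" "q \<in> V" "p \<noteq> q"
    then show "G.edge_prod p q dvd H.edge_prod (\<psi> p) (\<psi> q)"
      using sign[of "\<psi> p" "\<psi> q"] \<phi>\<psi> bij_betw_apply[OF \<psi>] by (metis dvd_refl dvd_minus_iff)
  qed
  ultimately have "bij_betw \<Phi> G.cohom H.cohom"
    by (intro bij_betw_byWitness[where f' = \<Psi>])
      (use \<phi>\<psi> \<psi>\<phi> G.cohom_vanishes H.cohom_vanishes bij_betw_apply[OF \<phi>] bij_betw_apply[OF \<psi>]
        in \<open>auto simp: \<Phi>_def \<Psi>_def fun_eq_iff\<close>)
  then have "alg_iso V G.cohom V' H.cohom \<Phi>"
    using bij_betw_apply[OF \<phi>] by (auto simp: alg_iso_def \<Phi>_def one_on_def fun_eq_iff)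
  then show ?thesis by blast
qed

lemma alg_iso_inverse:
  assumes iso: "alg_iso V G.cohom V' H.cohom \<Phi>"
  shows "alg_iso V' H.cohom V G.cohom (the_inv_into G.cohom \<Phi>)"
proof -
  define \<Psi> where "\<Psi> = the_inv_into G.cohom \<Phi>"
  have bij: "bij_betw \<Phi> G.cohom H.cohom"
    using iso by (rule alg_iso_bij)
  have \<Psi>: "\<Psi> g \<in> G.cohom" if "g \<in> H.cohom" for g
    unfolding \<Psi>_def using bij that by (metis bij_betw_def the_inv_into_into order_refl)
  have \<Phi>\<Psi>: "\<Phi> (\<Psi> g) = g" if "g \<in> H.cohom" for g
    unfolding \<Psi>_def using bij that by (simp add: f_the_inv_into_f_bij_betw)
  have \<Psi>\<Phi>: "\<Psi> (\<Phi> f) = f" if "f \<in> G.cohom" for f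
    unfolding \<Psi>_def using bij that by (simp add: bij_betw_def the_inv_into_f_f)
  have "\<Psi> (\<lambda>v. g1 v + g2 v) = (\<lambda>w. \<Psi> g1 w + \<Psi> g2 w)"
    and "\<Psi> (\<lambda>v. g1 v * g2 v) = (\<lambda>w. \<Psi> g1 w * \<Psi> g2 w)"
    and "\<Psi> (\<lambda>v. c * g1 v) = (\<lambda>w. c * \<Psi> g1 w)"
    if g: "g1 \<in> H.cohom" "g2 \<in> H.cohom" for g1 g2 c
    using alg_iso_add[OF iso \<Psi>[OF g(1)] \<Psi>[OF g(2)]] alg_iso_mult[OF iso \<Psi>[OF g(1)] \<Psi>[OF g(2)]]
      alg_iso_smult[OF iso \<Psi>[OF g(1)], of c]
      \<Psi>\<Phi>[OF G.cohom_add[OF \<Psi>[OF g(1)] \<Psi>[OF g(2)]]]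
      \<Psi>\<Phi>[OF G.cohom_mult[OF \<Psi>[OF g(1)] \<Psi>[OF g(2)]]]
      \<Psi>\<Phi>[OF G.cohom_smult[OF \<Psi>[OF g(1)], of c]]
    by (simp_all add: \<Phi>\<Psi> g)
  moreover have "\<Psi> (one_on V') = one_on V"
    using alg_iso_one[OF iso] \<Psi>\<Phi>[OF G.one_on_cohom] by simp
  moreover have "bij_betw \<Psi> H.cohom G.cohom"
    unfolding \<Psi>_def using bij by (rule bij_betw_the_inv_into)
  ultimately have "alg_iso V' H.cohom V G.cohom \<Psi>"
    unfolding alg_iso_def by blast
  then show ?thesis by (simp add: \<Psi>_def)
qed

lemma alg_iso_zero:
  assumes "alg_iso V G.cohom V' H.cohom \<Phi>"
  shows "\<Phi> (\<lambda>v. 0) = (\<lambda>w. 0)"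
  using alg_iso_smult[OF assms G.zero_cohom, of 0] by simp

text \<open>Thom classes are, up to the factor \<open>euler_class p\<close>, orthogonal idempotents; since the
  polynomial ring is a domain, their images under an algebra isomorphism take only the values
  \<open>0\<close> and \<open>euler_class p\<close>, with disjoint supports.\<close>
lemma alg_iso_thom_class_cases:
  assumes iso: "alg_iso V G.cohom V' H.cohom \<Phi>" and p: "p \<in> V"
  shows "\<Phi> (G.thom_class p) x = 0 \<or> \<Phi> (G.thom_class p) x = G.euler_class p"
proof -
  have "(\<lambda>v. G.thom_class p v * G.thom_class p v) = (\<lambda>v. G.euler_class p * G.thom_class p v)"
    by (simp add: G.thom_class_def fun_eq_iff)
  then have "\<Phi> (G.thom_class p) x * \<Phi> (G.thom_class p) x = G.euler_class p * \<Phi> (G.thom_class p) x"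
    using alg_iso_mult[OF iso G.thom_class_cohom[OF p] G.thom_class_cohom[OF p]]
      alg_iso_smult[OF iso G.thom_class_cohom[OF p], of "G.euler_class p"]
    by (metis (mono_tags, lifting))
  then have "\<Phi> (G.thom_class p) x * (\<Phi> (G.thom_class p) x - G.euler_class p) = 0"
    by (simp add: algebra_simps)
  then show ?thesis by simp
qed

lemma alg_iso_thom_classes_orthogonal:
  assumes iso: "alg_iso V G.cohom V' H.cohom \<Phi>" and "p \<in> V" "q \<in> V" "p \<noteq> q"
  shows "\<Phi> (G.thom_class p) x * \<Phi> (G.thom_class q) x = 0"
proof -
  have "(\<lambda>v. G.thom_class p v * G.thom_class q v) = (\<lambda>v. 0)"
    using assms(4) by (simp add: G.thom_class_def fun_eq_iff)
  then show ?thesis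
    using alg_iso_mult[OF iso G.thom_class_cohom[OF assms(2)] G.thom_class_cohom[OF assms(3)]]
      alg_iso_zero[OF iso] by (metis (mono_tags, lifting))
qed

lemma alg_iso_thom_class_nonzero:
  assumes iso: "alg_iso V G.cohom V' H.cohom \<Phi>" and p: "p \<in> V"
  shows "\<exists>x\<in>V'. \<Phi> (G.thom_class p) x = G.euler_class p"
proof (rule ccontr)
  have bij: "bij_betw \<Phi> G.cohom H.cohom"
    using iso by (rule alg_iso_bij)
  assume "\<not> ?thesis"
  then have "\<Phi> (G.thom_class p) = \<Phi> (\<lambda>v. 0)"
    using alg_iso_thom_class_cases[OF iso p] H.cohom_vanishes alg_iso_zero[OF iso]
      bij_betw_apply[OF bij G.thom_class_cohom[OF p]] by fastforce
  then have "G.thom_class p = (\<lambda>v. 0)"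
    using bij G.thom_class_cohom[OF p] G.zero_cohom by (metis bij_betw_def inj_onD)
  then show False
    using G.euler_class_nonzero by (metis G.thom_class_def singletonI)
qed

lemma alg_iso_eval:
  assumes iso: "alg_iso V G.cohom V' H.cohom \<Phi>" and p: "p \<in> V" and f: "f \<in> G.cohom"
    and x: "\<Phi> (G.thom_class p) x = G.euler_class p"
  shows "\<Phi> f x = f p"
proof -
  have "(\<lambda>v. f v * G.thom_class p v) = (\<lambda>v. f p * G.thom_class p v)"
    by (simp add: G.thom_class_def fun_eq_iff)
  then have "\<Phi> f x * G.euler_class p = f p * G.euler_class p"
    using alg_iso_mult[OF iso f G.thom_class_cohom[OF p]]
      alg_iso_smult[OF iso G.thom_class_cohom[OF p], of "f p"] x by (metis (mono_tags, lifting))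
  then have "(\<Phi> f x - f p) * G.euler_class p = 0"
    by (simp add: algebra_simps)
  then show ?thesis
    using G.euler_class_nonzero by simp
qed

lemma alg_iso_vertex_map:
  assumes iso: "alg_iso V G.cohom V' H.cohom \<Phi>"
  shows "\<exists>\<mu>. inj_on \<mu> V \<and> \<mu> ` V \<subseteq> V' \<and> (\<forall>p\<in>V. \<Phi> (G.thom_class p) (\<mu> p) = G.euler_class p)"
proof -
  define \<mu> where "\<mu> p = (SOME x. x \<in> V' \<and> \<Phi> (G.thom_class p) x = G.euler_class p)" for p
  have \<mu>: "\<mu> p \<in> V' \<and> \<Phi> (G.thom_class p) (\<mu> p) = G.euler_class p" if "p \<in> V" for p
    unfolding \<mu>_def using alg_iso_thom_class_nonzero[OF iso that] by (rule someI2_bex) auto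
  have "inj_on \<mu> V"
  proof (rule inj_onI, rule ccontr)
    fix p q assume "p \<in> V" "q \<in> V" "\<mu> p = \<mu> q" "p \<noteq> q"
    then have "G.euler_class p * G.euler_class q = 0"
      using alg_iso_thom_classes_orthogonal[OF iso, of p q "\<mu> p"] \<mu> by metis
    then show False using G.euler_class_nonzero by simp
  qed
  then show ?thesis using \<mu> by blast
qed

text \<open>An algebra isomorphism is the pullback along a bijection of the vertex sets: the images
  of the Thom classes locate the vertices, and counting them from both sides shows that the
  resulting injection is onto.\<close>
lemma alg_iso_pullback:
  assumes iso: "alg_iso V G.cohom V' H.cohom \<Phi>"
  shows "\<exists>\<phi>. bij_betw \<phi> V' V \<and> (\<forall>f\<in>G.cohom. \<forall>x\<in>V'. \<Phi> f x = f (\<phi> x))"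
proof -
  interpret swap: gkm_pair n' V' E' src' tgt' rv' \<alpha>' n V E src tgt rv \<alpha> ..
  obtain \<mu> where \<mu>: "inj_on \<mu> V" "\<mu> ` V \<subseteq> V'"
    "\<forall>p\<in>V. \<Phi> (G.thom_class p) (\<mu> p) = G.euler_class p"
    using alg_iso_vertex_map[OF iso] by blast
  obtain \<mu>' where "inj_on \<mu>' V'" "\<mu>' ` V' \<subseteq> V"
    using swap.alg_iso_vertex_map[OF alg_iso_inverse[OF iso]] by blast
  then have "card V' \<le> card V"
    using card_inj_on_le G.finite_V by blast
  then have "\<mu> ` V = V'"
    using \<mu>(1,2) H.finite_V by (metis card_image card_seteq)
  then have bij: "bij_betw \<mu> V V'"
    using \<mu>(1) by (simp add: bij_betw_def)
  have "\<Phi> f x = f (inv_into V \<mu> x)" if "f \<in> G.cohom" "x \<in> V'" for f x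
    using alg_iso_eval[OF iso _ that(1)] \<mu>(3) \<open>\<mu> ` V = V'\<close> that(2)
    by (metis f_inv_into_f inv_into_into)
  then show ?thesis
    using bij_betw_inv_into[OF bij] by blast
qed

lemma edge_lifts:
  assumes \<phi>: "bij_betw \<phi> V' V"
    and pullback: "\<And>f. f \<in> G.cohom \<Longrightarrow> \<exists>g\<in>H.cohom. \<forall>x\<in>V'. g x = f (\<phi> x)"
    and e': "e' \<in> E'"
  shows "\<exists>e\<in>E. src e = \<phi> (src' e') \<and> tgt e = \<phi> (tgt' e') \<and> (\<alpha> e = \<alpha>' e' \<or> \<alpha> e = - \<alpha>' e')"
proof (rule G.edge_if_dvd_all)
  show "\<phi> (src' e') \<in> V"
    using H.edgeD(1)[OF e'] bij_betw_apply[OF \<phi>] by blast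
  show "\<phi> (tgt' e') \<noteq> \<phi> (src' e')"
    using H.edgeD(1-3)[OF e'] \<phi> by (metis bij_betw_imp_inj_on inj_onD)
  show "primitive (\<alpha>' e')"
    using e' by (rule H.primitive_label)
  fix f assume "f \<in> G.cohom"
  then obtain g where g: "g \<in> H.cohom" "\<forall>x\<in>V'. g x = f (\<phi> x)"
    using pullback by blast
  have "lin (\<alpha>' e') dvd g (src' e') - g (tgt' e')"
    using H.cohom_edge_dvd[OF g(1) e'] .
  then show "lin (\<alpha>' e') dvd f (\<phi> (src' e')) - f (\<phi> (tgt' e'))"
    using g(2) H.edgeD(1,2)[OF e'] by simp
qed

lemma gkm_iso_if_edges_match:
  assumes \<phi>: "bij_betw \<phi> V' V"
    and lift: "\<And>e'. e' \<in> E' \<Longrightarrow>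
      \<exists>e\<in>E. src e = \<phi> (src' e') \<and> tgt e = \<phi> (tgt' e') \<and> (\<alpha> e = \<alpha>' e' \<or> \<alpha> e = - \<alpha>' e')"
    and lift': "\<And>e. e \<in> E \<Longrightarrow>
      \<exists>e'\<in>E'. \<phi> (src' e') = src e \<and> \<phi> (tgt' e') = tgt e \<and> (\<alpha>' e' = \<alpha> e \<or> \<alpha>' e' = - \<alpha> e)"
  shows "gkm_iso V' E' src' tgt' \<alpha>' V E src tgt \<alpha> \<phi>"
  unfolding gkm_iso_def
proof (intro conjI \<phi> ballI impI)
  fix p q assume pq: "p \<in> V'" "q \<in> V'" "p \<noteq> q"
  let ?X = "{e \<in> E. src e = \<phi> p \<and> tgt e = \<phi> q}" and ?Y = "{e' \<in> E'. src' e' = p \<and> tgt' e' = q}"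
  have \<phi>_eq: "\<phi> w = \<phi> p \<longleftrightarrow> w = p" "\<phi> w = \<phi> q \<longleftrightarrow> w = q" if "w \<in> V'" for w
    using \<phi> pq that by (auto dest: bij_betw_imp_inj_on inj_onD)
  show "G.edge_prod (\<phi> p) (\<phi> q) = H.edge_prod p q \<or> G.edge_prod (\<phi> p) (\<phi> q) = - H.edge_prod p q"
    unfolding P_prod_def
  proof (rule prod_eq_up_to_sign)
    show "finite ?X" "finite ?Y"
      using G.finite_E H.finite_E by simp_all
    show "\<exists>y\<in>?Y. lin (\<alpha> x) = lin (\<alpha>' y) \<or> lin (\<alpha> x) = - lin (\<alpha>' y)" if "x \<in> ?X" for x
      using lift'[of x] that \<phi>_eq H.edgeD(1,2) by (auto simp: lin_uminus)
    show "\<exists>x\<in>?X. lin (\<alpha> x) = lin (\<alpha>' y) \<or> lin (\<alpha> x) = - lin (\<alpha>' y)" if "y \<in> ?Y" for y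
      using lift[of y] that by (auto simp: lin_uminus)
    show "x = x'" if "x \<in> ?X" "x' \<in> ?X" "lin (\<alpha> x) = lin (\<alpha> x') \<or> lin (\<alpha> x) = - lin (\<alpha> x')"
      for x x'
      using that G.edge_eq_if_label_assoc by auto
    show "y = y'" if "y \<in> ?Y" "y' \<in> ?Y" "lin (\<alpha>' y) = lin (\<alpha>' y') \<or> lin (\<alpha>' y) = - lin (\<alpha>' y')"
      for y y'
      using that H.edge_eq_if_label_assoc by auto
  qed
qed

lemma gkm_iso_if_alg_iso:
  assumes iso: "alg_iso V G.cohom V' H.cohom \<Phi>"
  shows "\<exists>\<phi>. gkm_iso V' E' src' tgt' \<alpha>' V E src tgt \<alpha> \<phi>"
proof -
  interpret swap: gkm_pair n' V' E' src' tgt' rv' \<alpha>' n V E src tgt rv \<alpha> ..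
  obtain \<phi> where \<phi>: "bij_betw \<phi> V' V"
    and pullback: "\<forall>f\<in>G.cohom. \<forall>x\<in>V'. \<Phi> f x = f (\<phi> x)"
    using alg_iso_pullback[OF iso] by blast
  define \<psi> where "\<psi> = inv_into V' \<phi>"
  have \<psi>: "bij_betw \<psi> V V'"
    unfolding \<psi>_def by (rule bij_betw_inv_into[OF \<phi>])
  have \<phi>\<psi>: "\<phi> (\<psi> v) = v" if "v \<in> V" for v
    unfolding \<psi>_def using \<phi> that by (meson bij_betw_inv_into_right)
  have "gkm_iso V' E' src' tgt' \<alpha>' V E src tgt \<alpha> \<phi>"
  proof (rule gkm_iso_if_edges_match[OF \<phi>])
    fix e' assume "e' \<in> E'"
    then show "\<exists>e\<in>E. src e = \<phi> (src' e') \<and> tgt e = \<phi> (tgt' e') \<and> (\<alpha> e = \<alpha>' e' \<or> \<alpha> e = - \<alpha>' e')"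
      by (rule edge_lifts[OF \<phi>, rotated])
        (use pullback bij_betw_apply[OF alg_iso_bij[OF iso]] in blast)
  next
    fix e assume e: "e \<in> E"
    have "\<exists>f\<in>G.cohom. \<forall>v\<in>V. f v = g (\<psi> v)" if "g \<in> H.cohom" for g
    proof -
      obtain f where "f \<in> G.cohom" "\<Phi> f = g"
        using alg_iso_bij[OF iso] \<open>g \<in> H.cohom\<close> by (metis bij_betw_imp_surj_on imageE)
      then show ?thesis
        using pullback \<phi>\<psi> bij_betw_apply[OF \<psi>] by metis
    qed
    then obtain e' where e': "e' \<in> E'" "src' e' = \<psi> (src e)" "tgt' e' = \<psi> (tgt e)"
      "\<alpha>' e' = \<alpha> e \<or> \<alpha>' e' = - \<alpha> e"
      using swap.edge_lifts[OF \<psi> _ e] by blast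
    show "\<exists>e'\<in>E'. \<phi> (src' e') = src e \<and> \<phi> (tgt' e') = tgt e \<and> (\<alpha>' e' = \<alpha> e \<or> \<alpha>' e' = - \<alpha> e)"
      by (rule bexI[OF _ e'(1)]) (simp add: e'(2-4) \<phi>\<psi> G.edgeD(1,2)[OF e])
  qed
  then show ?thesis by blast
qed

end

theorem theorem1p1:
  fixes V :: "'v set" and E :: "'e set" and src tgt :: "'e \<Rightarrow> 'v" and rv :: "'e \<Rightarrow> 'e"
    and \<alpha> :: "'e \<Rightarrow> ('r::finite \<Rightarrow> int)"
    and V' :: "'w set" and E' :: "'f set" and src' tgt' :: "'f \<Rightarrow> 'w" and rv' :: "'f \<Rightarrow> 'f"
    and \<alpha>' :: "'f \<Rightarrow> ('r \<Rightarrow> int)"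
    and n n' :: nat
  assumes "gkm_graph n V E src tgt rv \<alpha>"
    and "gkm_graph n' V' E' src' tgt' rv' \<alpha>'"
  shows "(\<exists>\<Phi>. alg_iso V (gkm_cohom V E src tgt \<alpha>) V' (gkm_cohom V' E' src' tgt' \<alpha>') \<Phi>)
     \<longleftrightarrow> (\<exists>\<phi>. gkm_iso V' E' src' tgt' \<alpha>' V E src tgt \<alpha> \<phi>)"
proof -
  interpret gkm_pair n V E src tgt rv \<alpha> n' V' E' src' tgt' rv' \<alpha>'
    using assms by (simp add: gkm_pair_def gkm_def)
  show ?thesis
    using gkm_iso_if_alg_iso alg_iso_if_gkm_iso by blast
qed

end
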